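(* Let $n\ge1$. There exist constants $C>0$ and $\delta_0>0$ depending only on $n$ such that for every $0<\delta<\delta_0$ and every $Q\in SO(n,\mathbb C)\cap M_\delta$ there exists $U\in SO(n,\mathbb R)$ with $|Q-U|<C\delta$.
   Context: $|\cdot|$ is the operator norm. Writing $z=x+iy$ with $x,y$ real matrices, $M_\delta=\{z\in{\rm Mat}(n,\mathbb C):|y|<\delta|x|\}$. $SO(n,\mathbb C)$ is the group of complex matrices $Q$ with $QQ^T=I$, $\det Q=1$. *)

theory Defs
  imports "HOL-Analysis.Analysis"
begin

definition re_mat :: "complex^'n^'m \<Rightarrow> real^'n^'m" where
  "re_mat z = (\<chi> i j. Re (z$i$j))"

definition im_mat :: "complex^'n^'m \<Rightarrow> real^'n^'m" where
  "im_mat z = (\<chi> i j. Im (z$i$j))"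

definition cplx_mat :: "real^'n^'m \<Rightarrow> complex^'n^'m" where
  "cplx_mat U = (\<chi> i j. complex_of_real (U$i$j))"

definition opnorm_c :: "complex^'n^'m \<Rightarrow> real" where
  "opnorm_c A = onorm (\<lambda>v::complex^'n. A *v v)"

definition opnorm_r :: "real^'n^'m \<Rightarrow> real" where
  "opnorm_r A = onorm (\<lambda>v::real^'n. A *v v)"

definition M_delta :: "real \<Rightarrow> (complex^'n^'n) set" where
  "M_delta \<delta> = {z. opnorm_r (im_mat z) < \<delta> * opnorm_r (re_mat z)}"

definition SO_C :: "(complex^'n^'n) set" where
  "SO_C = {Q. Q ** transpose Q = mat 1 \<and> det Q = 1}"

definition SO_R :: "(real^'n^'n) set" where
  "SO_R = {U. U ** transpose U = mat 1 \<and> det U = 1}"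

end

theory Submission
  imports Defs
begin

text \<open>
  Distances are measured in the entrywise \<open>l\<^sub>1\<close> norm, which is submultiplicative and
  dominates the operator norm. For \<open>Q = X + i Y\<close> in \<open>SO(n,\<complex>) \<inter> M\<^sub>\<delta>\<close>, the diagonal of
  \<open>Q Q\<^sup>T = 1\<close> says that every row of \<open>X\<close> has squared length \<open>1\<close> plus that of the same row
  of \<open>Y\<close>; together with \<open>|Y| < \<delta> |X|\<close> this bounds \<open>|X|\<close>, so \<open>Q\<close> is bounded and \<open>Y = O(\<delta>)\<close>.
  By compactness, a bounded element of \<open>SO(n,\<complex>)\<close> with small imaginary part is close to
  some \<open>V \<in> SO(n,\<real>)\<close>, and then \<open>W = Q V\<^sup>T\<close> is an orthogonal matrix close to \<open>1\<close>.
  For such \<open>W\<close> the inverse \<open>B\<close> of \<open>1 + W\<close> satisfies \<open>B + B\<^sup>T = 1\<close>, hence so does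
  \<open>R = Re B\<close>, and the Cayley transform \<open>U = R\<^sup>-\<^sup>1 - 1\<close> lies in \<open>SO(n,\<real>)\<close>.
  The identities \<open>W - U = (1 + W)(R - B)R\<^sup>-\<^sup>1\<close> and \<open>B - B\<^sup>* = B (W\<^sup>* - W) B\<^sup>*\<close>
  (\<open>\<^sup>*\<close> denoting entrywise conjugation) give \<open>|W - U| = O(|Im W|)\<close>, so \<open>U V\<close> is within
  \<open>O(\<delta>)\<close> of \<open>Q\<close>.
\<close>

lemma matrix_add_rdistrib: "(A + B) ** C = A ** C + B ** (C::'a::semiring_1^'p^'n)"
  by (vector matrix_matrix_mult_def sum.distrib[symmetric] field_simps)

lemma matrix_diff_ldistrib: "(C::'a::ring_1^'p^'n) ** (A - B) = C ** A - C ** B"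
  by (vector matrix_matrix_mult_def sum_subtractf[symmetric] field_simps)

lemma matrix_diff_rdistrib: "(A - B) ** C = A ** C - B ** (C::'a::ring_1^'p^'n)"
  by (vector matrix_matrix_mult_def sum_subtractf[symmetric] field_simps)

lemma transpose_add: "transpose (A + B) = transpose A + transpose B"
  by (simp add: transpose_def vec_eq_iff)

lemma transpose_diff: "transpose (A - B) = transpose A - transpose (B::'a::ab_group_add^'n^'m)"
  by (simp add: transpose_def vec_eq_iff)

lemma matrix_inverse_diff:
  fixes B M M' B' :: "'a::ring_1^'n^'n"
  assumes "B ** M = mat 1" and "M' ** B' = mat 1"
  shows "B - B' = B ** (M' - M) ** B'"
  by (simp add: matrix_diff_ldistrib matrix_diff_rdistrib assms flip: matrix_mul_assoc)

lemma continuous_on_matrix_mult [continuous_intros]: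
  fixes f :: "_ \<Rightarrow> 'a::real_normed_algebra_1^'k^'m" and g :: "_ \<Rightarrow> 'a^'n^'k"
  shows "continuous_on S f \<Longrightarrow> continuous_on S g \<Longrightarrow> continuous_on S (\<lambda>x. f x ** g x)"
  unfolding matrix_matrix_mult_def by (intro continuous_intros)

lemma continuous_on_transpose [continuous_intros]:
  "continuous_on S f \<Longrightarrow> continuous_on S (\<lambda>x. transpose (f x))"
  unfolding transpose_def by (intro continuous_intros)

lemma norm_vec_le_sum_norm: "norm (x::'a::real_normed_vector^'n) \<le> (\<Sum>i\<in>UNIV. norm (x$i))"
  unfolding norm_vec_def by (rule L2_set_le_sum) auto

lemma norm_axis_one: "norm (axis j (1::'a::real_normed_algebra_1)) = 1"
proof -
  have "(\<Sum>i\<in>UNIV. (norm (axis j (1::'a) $ i))\<^sup>2) = (\<Sum>i\<in>UNIV. if i = j then 1 else 0)"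
    by (intro sum.cong refl) (simp add: axis_def)
  then show ?thesis unfolding norm_vec_def L2_set_def by simp
qed

lemma bounded_below_matrix_inverse:
  fixes M :: "'a::real_normed_field^'n^'n"
  assumes below: "\<And>x. norm x \<le> c * norm (M *v x)"
  obtains B where "B ** M = mat 1" "M ** B = mat 1" "\<And>i j. norm (B$i$j) \<le> c"
proof -
  have "inj ((*v) M)"
  proof (rule injI)
    fix x y assume "M *v x = M *v y"
    then have "norm (x - y) \<le> 0"
      using below[of "x - y"] by (simp add: matrix_vector_mult_diff_distrib)
    then show "x = y" by simp
  qed
  then obtain B where BM: "B ** M = mat 1" using matrix_left_invertible_injective by blast
  then have MB: "M ** B = mat 1" using matrix_left_right_inverse by blast
  have "norm (B$i$j) \<le> c" for i j
  proof -
    have "norm (B$i$j) \<le> norm (B *v axis j 1)"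
      using Finite_Cartesian_Product.norm_nth_le[of "B *v axis j 1" i]
      by (simp add: matrix_vector_mult_def axis_def if_distrib cong: if_cong)
    also have "\<dots> \<le> c * norm (M *v (B *v axis j 1))" by (rule below)
    also have "M *v (B *v axis j 1) = axis j 1"
      by (simp add: matrix_vector_mul_assoc MB)
    finally show ?thesis by (simp add: norm_axis_one)
  qed
  with BM MB that show ?thesis by blast
qed

section \<open>The entrywise \<open>l\<^sub>1\<close> norm\<close>

definition mat_l1_norm :: "'a::real_normed_vector^'n^'m \<Rightarrow> real" where
  "mat_l1_norm A = (\<Sum>i\<in>UNIV. \<Sum>j\<in>UNIV. norm (A$i$j))"

lemma mat_l1_norm_nonneg: "0 \<le> mat_l1_norm A"
  unfolding mat_l1_norm_def by (intro sum_nonneg) auto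

lemma mat_l1_norm_eq_0_iff: "mat_l1_norm A = 0 \<longleftrightarrow> A = 0"
  unfolding mat_l1_norm_def by (simp add: sum_nonneg_eq_0_iff sum_nonneg vec_eq_iff)

lemma mat_l1_norm_triangle: "mat_l1_norm (A + B) \<le> mat_l1_norm A + mat_l1_norm B"
  unfolding mat_l1_norm_def by (simp add: sum.distrib[symmetric] sum_mono norm_triangle_ineq)

lemma mat_l1_norm_minus_commute: "mat_l1_norm (A - B) = mat_l1_norm (B - A)"
  unfolding mat_l1_norm_def by (simp add: norm_minus_commute)

lemma mat_l1_norm_le:
  assumes "\<And>i j. norm (A$i$j) \<le> c"
  shows "mat_l1_norm (A::'a::real_normed_vector^'n^'m) \<le> real CARD('m) * real CARD('n) * c"
proof -
  have "mat_l1_norm A \<le> (\<Sum>i\<in>(UNIV::'m set). \<Sum>j\<in>(UNIV::'n set). c)"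
    unfolding mat_l1_norm_def by (intro sum_mono assms)
  then show ?thesis by simp
qed

lemma mat_l1_norm_mult:
  fixes A :: "'a::real_normed_algebra_1^'k^'m" and B :: "'a^'n^'k"
  shows "mat_l1_norm (A ** B) \<le> mat_l1_norm A * mat_l1_norm B"
proof -
  have "mat_l1_norm (A ** B) \<le> (\<Sum>i\<in>UNIV. \<Sum>j\<in>UNIV. \<Sum>k\<in>UNIV. norm (A$i$k) * norm (B$k$j))"
    unfolding mat_l1_norm_def matrix_matrix_mult_def
    by (intro sum_mono) (simp, rule order_trans[OF norm_sum], intro sum_mono norm_mult_ineq)
  also have "\<dots> \<le> (\<Sum>i\<in>UNIV. \<Sum>j\<in>UNIV. \<Sum>k\<in>UNIV. \<Sum>l\<in>UNIV. norm (A$i$k) * norm (B$l$j))"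
    by (intro sum_mono member_le_sum) auto
  also have "\<dots> = mat_l1_norm A * mat_l1_norm B"
    unfolding mat_l1_norm_def sum_distrib_right unfolding sum_distrib_left
    by (intro sum.cong refl) (subst sum.swap, simp add: sum.swap[of _ "UNIV::'n set" "UNIV::'k set"])
  finally show ?thesis .
qed

lemma mat_l1_norm_mult3:
  fixes A :: "'a::real_normed_algebra_1^'k^'m" and B :: "'a^'l^'k" and C :: "'a^'n^'l"
  shows "mat_l1_norm (A ** B ** C) \<le> mat_l1_norm A * mat_l1_norm B * mat_l1_norm C"
  by (meson mat_l1_norm_mult mat_l1_norm_nonneg mult_right_mono order_trans)

lemma mat_l1_norm_transpose: "mat_l1_norm (transpose A) = mat_l1_norm A"
  unfolding mat_l1_norm_def transpose_def by (simp, subst sum.swap, simp)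

lemma mat_l1_norm_mat: "mat_l1_norm (mat c :: 'a::real_normed_vector^'n^'n) = real CARD('n) * norm c"
proof -
  have "mat_l1_norm (mat c :: 'a^'n^'n) = (\<Sum>i\<in>(UNIV::'n set). \<Sum>j\<in>UNIV. if i = j then norm c else 0)"
    unfolding mat_l1_norm_def mat_def by (intro sum.cong refl) auto
  then show ?thesis by simp
qed

lemma norm_le_mat_l1_norm: "norm A \<le> mat_l1_norm A"
proof -
  have "norm A \<le> (\<Sum>i\<in>UNIV. norm (A$i))" by (rule norm_vec_le_sum_norm)
  also have "\<dots> \<le> (\<Sum>i\<in>UNIV. \<Sum>j\<in>UNIV. norm (A$i$j))"
    by (intro sum_mono norm_vec_le_sum_norm)
  finally show ?thesis unfolding mat_l1_norm_def .
qed

lemma norm_matrix_vector_mult_le: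
  fixes A :: "'a::real_normed_algebra_1^'n^'m"
  shows "norm (A *v x) \<le> mat_l1_norm A * norm x"
proof -
  have "norm (A *v x) \<le> (\<Sum>i\<in>UNIV. norm ((A *v x)$i))" by (rule norm_vec_le_sum_norm)
  also have "\<dots> \<le> (\<Sum>i\<in>UNIV. \<Sum>j\<in>UNIV. norm (A$i$j) * norm x)"
    unfolding matrix_vector_mult_def
    by (intro sum_mono) (simp, rule order_trans[OF norm_sum], intro sum_mono
        order_trans[OF norm_mult_ineq] mult_left_mono Finite_Cartesian_Product.norm_nth_le norm_ge_zero)
  finally show ?thesis unfolding mat_l1_norm_def by (simp add: sum_distrib_right)
qed

lemma opnorm_c_le_mat_l1_norm: "opnorm_c A \<le> mat_l1_norm A"
  unfolding opnorm_c_def by (rule onorm_le) (rule norm_matrix_vector_mult_le)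

lemma continuous_on_mat_l1_norm [continuous_intros]:
  "continuous_on S f \<Longrightarrow> continuous_on S (\<lambda>x. mat_l1_norm (f x))"
  unfolding mat_l1_norm_def by (intro continuous_intros)

definition cnj_mat :: "complex^'n^'m \<Rightarrow> complex^'n^'m" where
  "cnj_mat A = (\<chi> i j. cnj (A$i$j))"

lemma cnj_mat_mult: "cnj_mat (A ** B) = cnj_mat A ** cnj_mat B"
  unfolding cnj_mat_def matrix_matrix_mult_def by (simp add: vec_eq_iff)

lemma cnj_mat_add: "cnj_mat (A + B) = cnj_mat A + cnj_mat B"
  unfolding cnj_mat_def by (simp add: vec_eq_iff)

lemma cnj_mat_mat_1: "cnj_mat (mat 1) = mat 1"
  unfolding cnj_mat_def mat_def by (simp add: vec_eq_iff)

lemma cnj_mat_cplx_mat: "cnj_mat (cplx_mat V) = cplx_mat V"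
  unfolding cnj_mat_def cplx_mat_def by (simp add: vec_eq_iff)

lemma mat_l1_norm_cnj_mat: "mat_l1_norm (cnj_mat A) = mat_l1_norm A"
  unfolding mat_l1_norm_def cnj_mat_def by simp

lemma continuous_on_cnj_mat [continuous_intros]:
  "continuous_on S f \<Longrightarrow> continuous_on S (\<lambda>x. cnj_mat (f x))"
  unfolding cnj_mat_def by (intro continuous_intros)

lemma cplx_mat_mult: "cplx_mat (A ** B) = cplx_mat A ** cplx_mat B"
  unfolding cplx_mat_def matrix_matrix_mult_def by (simp add: vec_eq_iff)

lemma cplx_mat_diff: "cplx_mat (A - B) = cplx_mat A - cplx_mat B"
  unfolding cplx_mat_def by (simp add: vec_eq_iff)

lemma cplx_mat_mat_1: "cplx_mat (mat 1) = mat 1"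
  unfolding cplx_mat_def mat_def by (simp add: vec_eq_iff)

lemma cplx_mat_transpose: "cplx_mat (transpose A) = transpose (cplx_mat A)"
  unfolding cplx_mat_def transpose_def by (simp add: vec_eq_iff)

lemma cplx_mat_inject: "cplx_mat A = cplx_mat B \<longleftrightarrow> A = B"
  unfolding cplx_mat_def by (simp add: vec_eq_iff)

lemma det_cplx_mat: "det (cplx_mat (A::real^'n^'n)) = complex_of_real (det A)"
  unfolding det_def cplx_mat_def by simp

lemma mat_l1_norm_cplx_mat: "mat_l1_norm (cplx_mat A) = mat_l1_norm A"
  unfolding mat_l1_norm_def cplx_mat_def by simp

lemma mat_l1_norm_re_mat:
  "2 * mat_l1_norm (cplx_mat (re_mat B) - B) = mat_l1_norm (B - cnj_mat B)"
proof -
  have "2 * cmod (complex_of_real (Re z) - z) = cmod (z - cnj z)" for z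
  proof -
    have "complex_of_real (Re z) - z = - (\<i> * complex_of_real (Im z))"
      and "z - cnj z = 2 * \<i> * complex_of_real (Im z)"
      by (simp_all add: complex_eq_iff)
    then show ?thesis by (simp add: norm_mult)
  qed
  then show ?thesis
    unfolding mat_l1_norm_def cplx_mat_def re_mat_def cnj_mat_def by (simp add: sum_distrib_left)
qed

lemma SO_R_mult:
  assumes "U \<in> SO_R" and "V \<in> SO_R"
  shows "U ** V \<in> SO_R"
proof -
  have "(U ** V) ** transpose (U ** V) = U ** (V ** transpose V) ** transpose U"
    by (simp add: matrix_transpose_mul matrix_mul_assoc)
  with assms show ?thesis unfolding SO_R_def by (simp add: det_mul)
qed

lemma mat_l1_norm_SO_R: "V \<in> SO_R \<Longrightarrow> mat_l1_norm (V::real^'n^'n) \<le> real CARD('n) ^ 2"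
proof -
  assume "V \<in> SO_R"
  then have V: "V ** transpose V = mat 1" unfolding SO_R_def by blast
  have "(\<Sum>k\<in>UNIV. V$i$k * V$i$k) = 1" for i
    using V[THEN arg_cong[where f="\<lambda>A. A$i$i"]]
    by (simp add: matrix_matrix_mult_def transpose_def mat_def)
  moreover have "V$i$j * V$i$j \<le> (\<Sum>k\<in>UNIV. V$i$k * V$i$k)" for i j
    by (rule member_le_sum[where f="\<lambda>k. V$i$k * V$i$k"]) auto
  ultimately have "\<bar>V$i$j\<bar> \<le> 1" for i j
    by (metis abs_square_le_1 power2_eq_square)
  then show ?thesis using mat_l1_norm_le[of V 1] by (simp add: power2_eq_square)
qed

lemma closed_SO_C: "closed (SO_C :: (complex^'n^'n) set)"
  unfolding SO_C_def det_def by (intro closed_Collect_conj closed_Collect_eq continuous_intros)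

lemma SO_C_real_in_SO_R:
  assumes "Q \<in> SO_C" and "cnj_mat Q = Q"
  shows "re_mat Q \<in> SO_R" and "cplx_mat (re_mat Q) = Q"
proof -
  show Q: "cplx_mat (re_mat Q) = Q"
    using assms(2) unfolding cnj_mat_def cplx_mat_def re_mat_def
    by (simp add: vec_eq_iff complex_eq_iff)
  have "cplx_mat (re_mat Q ** transpose (re_mat Q)) = cplx_mat (mat 1)"
    using assms(1) unfolding SO_C_def by (simp add: cplx_mat_mult cplx_mat_transpose cplx_mat_mat_1 Q)
  moreover have "complex_of_real (det (re_mat Q)) = 1"
    using assms(1) unfolding SO_C_def by (simp flip: det_cplx_mat add: Q)
  ultimately show "re_mat Q \<in> SO_R"
    unfolding SO_R_def by (simp add: cplx_mat_inject)
qed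

section \<open>A Cayley transform near the identity\<close>

lemma norm_le_norm_mult_one_plus:
  fixes W :: "'a::real_normed_algebra_1^'n^'n"
  assumes "mat_l1_norm (W - mat 1) \<le> 1"
  shows "norm x \<le> norm ((mat 1 + W) *v x)"
proof -
  have "(mat 1 + W) *v x = (x + x) + (W - mat 1) *v x"
    by (simp add: matrix_vector_mult_add_rdistrib matrix_vector_mult_diff_rdistrib)
  moreover have "norm ((W - mat 1) *v x) \<le> norm x"
    using norm_matrix_vector_mult_le[of "W - mat 1" x] mult_right_mono[OF assms, of "norm x"]
    by simp
  moreover have "norm (x + x) = 2 * norm x"
    by (metis mult_2 norm_scaleR real_norm_def abs_numeral scaleR_2)
  ultimately show ?thesis
    using norm_triangle_ineq2[of "x + x" "- ((W - mat 1) *v x)"] by simp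
qed

lemma left_inverse_one_plus_orthogonal_add_transpose:
  fixes W B :: "'a::comm_ring_1^'n^'n"
  assumes W: "W ** transpose W = mat 1" and B: "B ** (mat 1 + W) = mat 1"
  shows "B + transpose B = mat 1"
proof -
  define M where "M = mat 1 + W"
  have "M ** transpose M = M + transpose M"
    unfolding M_def by (simp add: matrix_add_ldistrib matrix_add_rdistrib transpose_add W)
  then have "B ** (M ** transpose M) ** transpose B = B ** (M + transpose M) ** transpose B"
    by simp
  moreover have "B ** (M ** transpose M) ** transpose B = (B ** M) ** transpose (B ** M)"
    by (simp add: matrix_mul_assoc matrix_transpose_mul)
  moreover have "B ** (M + transpose M) ** transpose B
      = (B ** M) ** transpose B + B ** transpose (B ** M)"
    by (simp add: matrix_add_ldistrib matrix_add_rdistrib matrix_mul_assoc matrix_transpose_mul)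
  ultimately show ?thesis using B by (simp add: M_def add.commute)
qed

lemma norm_le_twice_norm_mult_if_add_transpose_eq_1:
  fixes R :: "real^'n^'n"
  assumes "R + transpose R = mat 1"
  shows "norm x \<le> 2 * norm (R *v x)"
proof -
  have "inner x x = inner x ((R + transpose R) *v x)"
    using assms by simp
  also have "\<dots> = 2 * inner x (R *v x)"
    using dot_lmul_matrix[of x R x]
    by (simp add: matrix_vector_mult_add_rdistrib inner_add_right inner_commute)
  also have "\<dots> \<le> 2 * (norm x * norm (R *v x))"
    using norm_cauchy_schwarz by simp
  finally have "norm x * norm x \<le> norm x * (2 * norm (R *v x))"
    by (simp add: power2_norm_eq_inner[symmetric] power2_eq_square)
  then show ?thesis
    by (cases "x = 0") auto
qed

lemma cayley_transform_in_SO_R: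
  fixes R Ri :: "real^'n^'n"
  assumes R: "R + transpose R = mat 1" and Ri: "Ri ** R = mat 1"
  shows "Ri - mat 1 \<in> SO_R"
proof -
  have "Ri ** (R + transpose R) ** transpose Ri
      = (Ri ** R) ** transpose Ri + Ri ** transpose (Ri ** R)"
    by (simp add: matrix_add_ldistrib matrix_add_rdistrib matrix_mul_assoc matrix_transpose_mul)
  then have "Ri ** transpose Ri = Ri + transpose Ri"
    by (simp add: R Ri add.commute)
  then have "(Ri - mat 1) ** transpose (Ri - mat 1) = mat 1"
    by (simp add: matrix_diff_ldistrib matrix_diff_rdistrib transpose_diff)
  moreover have "transpose R = mat 1 - R"
    using R by (simp add: algebra_simps)
  then have "Ri - mat 1 = Ri ** transpose R"
    by (simp add: matrix_diff_ldistrib Ri)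
  then have "det (Ri - mat 1) = det (Ri ** R)"
    by (simp add: det_mul)
  ultimately show ?thesis
    unfolding SO_R_def by (simp add: Ri)
qed

lemma mat_l1_norm_re_mat_inverse_le:
  fixes W B :: "complex^'n^'n"
  assumes BM: "B ** (mat 1 + W) = mat 1" and MB: "(mat 1 + W) ** B = mat 1"
    and B: "\<And>i j. cmod (B$i$j) \<le> 1"
  shows "mat_l1_norm (cplx_mat (re_mat B) - B) \<le> real CARD('n) ^ 4 / 2 * mat_l1_norm (W - cnj_mat W)"
proof -
  define n where "n = real CARD('n)"
  define T where "T = mat_l1_norm (W - cnj_mat W)"
  have "cnj_mat (mat 1 + W) ** cnj_mat B = mat 1"
    using MB by (metis cnj_mat_mult cnj_mat_mat_1)
  with BM have "B - cnj_mat B = B ** (cnj_mat (mat 1 + W) - (mat 1 + W)) ** cnj_mat B"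
    by (rule matrix_inverse_diff)
  then have imag: "B - cnj_mat B = B ** (cnj_mat W - W) ** cnj_mat B"
    by (simp add: cnj_mat_add cnj_mat_mat_1)
  have nB: "mat_l1_norm B \<le> n^2"
    using mat_l1_norm_le[of B 1] B by (simp add: n_def power2_eq_square)
  have "2 * mat_l1_norm (cplx_mat (re_mat B) - B) = mat_l1_norm (B - cnj_mat B)"
    by (rule mat_l1_norm_re_mat)
  also have "\<dots> \<le> mat_l1_norm B * T * mat_l1_norm (cnj_mat B)"
    unfolding imag T_def by (metis mat_l1_norm_mult3 mat_l1_norm_minus_commute)
  also have "\<dots> \<le> n^2 * T * n^2"
    using nB by (simp add: mat_l1_norm_cnj_mat T_def mat_l1_norm_nonneg mult_mono)
  finally show ?thesis
    by (simp add: n_def T_def power4_eq_xxxx power2_eq_square mult_ac)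
qed

lemma orthogonal_near_one_close_to_SO_R:
  fixes W :: "complex^'n^'n"
  assumes W: "W ** transpose W = mat 1" and near: "mat_l1_norm (W - mat 1) \<le> 1"
  shows "\<exists>U\<in>SO_R. mat_l1_norm (W - cplx_mat U)
           \<le> (2 * real CARD('n) + 1) * real CARD('n) ^ 6 * mat_l1_norm (W - cnj_mat W)"
proof -
  define n where "n = real CARD('n)"
  define T where "T = mat_l1_norm (W - cnj_mat W)"
  define M where "M = mat 1 + W"
  obtain B where BM: "B ** M = mat 1" and MB: "M ** B = mat 1" and B: "\<And>i j. cmod (B$i$j) \<le> 1"
    using bounded_below_matrix_inverse[where M=M and c=1] norm_le_norm_mult_one_plus[OF near]
    unfolding M_def by auto
  define R where "R = re_mat B"
  have "R + transpose R = mat 1"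
  proof -
    have "B + transpose B = mat 1"
      using left_inverse_one_plus_orthogonal_add_transpose[OF W] BM unfolding M_def by blast
    then have "Re ((B + transpose B)$i$j) = (mat 1 :: real^'n^'n)$i$j" for i j
      by (simp add: mat_def)
    then show ?thesis unfolding R_def re_mat_def transpose_def by (simp add: vec_eq_iff)
  qed
  then obtain Ri where RiR: "Ri ** R = mat 1" and RRi: "R ** Ri = mat 1"
    and Ri: "\<And>i j. norm (Ri$i$j) \<le> 2"
    by (metis bounded_below_matrix_inverse norm_le_twice_norm_mult_if_add_transpose_eq_1)
  have SO: "Ri - mat 1 \<in> SO_R"
    by (rule cayley_transform_in_SO_R) fact+
  have "W - cplx_mat (Ri - mat 1) = M - cplx_mat Ri"
    by (simp add: M_def cplx_mat_diff cplx_mat_mat_1)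
  also have "\<dots> = M ** (cplx_mat R - B) ** cplx_mat Ri"
    by (rule matrix_inverse_diff) (simp_all add: MB RRi cplx_mat_mat_1 flip: cplx_mat_mult)
  finally have "mat_l1_norm (W - cplx_mat (Ri - mat 1))
      \<le> mat_l1_norm M * mat_l1_norm (cplx_mat R - B) * mat_l1_norm (cplx_mat Ri)"
    by (simp add: mat_l1_norm_mult3)
  also have "\<dots> \<le> (2 * n + 1) * (n^4 / 2 * T) * (2 * n^2)"
  proof (intro mult_mono)
    have "M = mat 1 + (mat 1 + (W - mat 1))" by (simp add: M_def)
    then show "mat_l1_norm M \<le> 2 * n + 1"
      using mat_l1_norm_triangle[of "mat 1" "mat 1 + (W - mat 1)"]
        mat_l1_norm_triangle[of "mat 1" "W - mat 1"] near
      by (simp add: mat_l1_norm_mat n_def)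
    show "mat_l1_norm (cplx_mat R - B) \<le> n^4 / 2 * T"
      using mat_l1_norm_re_mat_inverse_le BM MB B unfolding R_def M_def n_def T_def by blast
    show "mat_l1_norm (cplx_mat Ri) \<le> 2 * n^2"
      using mat_l1_norm_le[of Ri 2] Ri by (simp add: mat_l1_norm_cplx_mat n_def power2_eq_square)
  qed (auto simp: mat_l1_norm_nonneg n_def T_def)
  also have "\<dots> = (2 * n + 1) * n^6 * T"
    by (simp add: power_add[symmetric] algebra_simps)
  finally show ?thesis
    using SO unfolding n_def T_def by blast
qed

lemma mat_l1_norm_mult_SO_R:
  fixes A :: "complex^'n^'m"
  assumes "V \<in> SO_R"
  shows "mat_l1_norm (A ** cplx_mat V) \<le> mat_l1_norm A * real CARD('n) ^ 2"
    and "mat_l1_norm (A ** transpose (cplx_mat V)) \<le> mat_l1_norm A * real CARD('n) ^ 2"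
  using mat_l1_norm_mult[of A "cplx_mat V"] mat_l1_norm_mult[of A "transpose (cplx_mat V)"]
    mult_left_mono[OF mat_l1_norm_SO_R[OF assms] mat_l1_norm_nonneg[of A]]
  by (simp_all add: mat_l1_norm_transpose mat_l1_norm_cplx_mat)

lemma SO_C_near_SO_R_linear_approx:
  fixes Q :: "complex^'n^'n"
  assumes Q: "Q \<in> SO_C" and V: "V \<in> SO_R"
    and QV: "mat_l1_norm (Q - cplx_mat V) \<le> 1 / real CARD('n) ^ 2"
  shows "\<exists>U\<in>SO_R. mat_l1_norm (Q - cplx_mat U)
           \<le> (2 * real CARD('n) + 1) * real CARD('n) ^ 10 * mat_l1_norm (Q - cnj_mat Q)"
proof -
  define n where "n = real CARD('n)"
  define cV where "cV = cplx_mat V"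
  define W where "W = Q ** transpose cV"
  have "cV ** transpose cV = mat 1"
    using V unfolding cV_def SO_R_def by (simp flip: cplx_mat_mult cplx_mat_transpose add: cplx_mat_mat_1)
  then have cV: "cV ** transpose cV = mat 1" "transpose cV ** cV = mat 1"
    using matrix_left_right_inverse by blast+
  have "W ** transpose W = Q ** (transpose cV ** cV) ** transpose Q"
    unfolding W_def by (simp add: matrix_transpose_mul matrix_mul_assoc)
  then have W: "W ** transpose W = mat 1"
    using Q cV unfolding SO_C_def by simp
  have "W - mat 1 = (Q - cV) ** transpose cV"
    unfolding W_def by (simp add: matrix_diff_rdistrib cV)
  then have "mat_l1_norm (W - mat 1) \<le> 1 / n^2 * n^2"
    using mat_l1_norm_mult_SO_R(2)[OF V, of "Q - cV"] mult_right_mono[OF QV, of "n^2"]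
    unfolding cV_def n_def by simp
  then obtain U' where U': "U' \<in> SO_R"
    and WU': "mat_l1_norm (W - cplx_mat U') \<le> (2 * n + 1) * n^6 * mat_l1_norm (W - cnj_mat W)"
    using orthogonal_near_one_close_to_SO_R[OF W] unfolding n_def by fastforce
  have "W - cnj_mat W = (Q - cnj_mat Q) ** transpose cV"
    unfolding W_def cV_def
    by (simp add: matrix_diff_rdistrib cnj_mat_mult cnj_mat_cplx_mat flip: cplx_mat_transpose)
  then have nW: "mat_l1_norm (W - cnj_mat W) \<le> mat_l1_norm (Q - cnj_mat Q) * n^2"
    using mat_l1_norm_mult_SO_R(2)[OF V] unfolding cV_def n_def by simp
  have "Q - cplx_mat (U' ** V) = (W - cplx_mat U') ** cV"
    unfolding W_def cV_def
    by (simp add: matrix_diff_rdistrib cplx_mat_mult cV[unfolded cV_def] flip: matrix_mul_assoc)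
  then have "mat_l1_norm (Q - cplx_mat (U' ** V)) \<le> mat_l1_norm (W - cplx_mat U') * n^2"
    using mat_l1_norm_mult_SO_R(1)[OF V] unfolding cV_def n_def by simp
  also have "\<dots> \<le> (2 * n + 1) * n^6 * (mat_l1_norm (Q - cnj_mat Q) * n^2) * n^2"
    using WU' nW by (intro mult_right_mono order_trans[OF WU'] mult_left_mono) (auto simp: n_def)
  also have "\<dots> = (2 * n + 1) * n^10 * mat_l1_norm (Q - cnj_mat Q)"
    by (simp add: power_add[symmetric] mult_ac)
  finally show ?thesis
    using SO_R_mult[OF U' V] unfolding n_def by blast
qed

section \<open>Compactness\<close>

lemma nearly_real_SO_C_near_SO_R:
  fixes \<rho> r :: real
  assumes r: "r > 0"
  shows "\<exists>\<epsilon>>0. \<forall>Q::complex^'n^'n. Q \<in> SO_C \<and> mat_l1_norm Q \<le> \<rho> \<and> mat_l1_norm (Q - cnj_mat Q) < \<epsilon>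
            \<longrightarrow> (\<exists>V\<in>SO_R. mat_l1_norm (Q - cplx_mat V) < r)"
proof -
  define K where "K = SO_C \<inter> {Q::complex^'n^'n. mat_l1_norm Q \<le> \<rho>}
    \<inter> (\<Inter>V\<in>SO_R. {Q. r \<le> mat_l1_norm (Q - cplx_mat V)})"
  have "closed K"
    unfolding K_def
    by (intro closed_Int closed_INT closed_SO_C ballI closed_Collect_le continuous_intros)
  moreover have "bounded K"
    by (rule bounded_subset[OF bounded_cball[of 0 \<rho>]])
       (auto simp: K_def intro: order_trans[OF norm_le_mat_l1_norm])
  ultimately have "compact K" by (simp add: compact_eq_bounded_closed)
  obtain \<epsilon> where \<epsilon>: "\<epsilon> > 0" and \<epsilon>K: "\<And>Q. Q \<in> K \<Longrightarrow> \<epsilon> \<le> mat_l1_norm (Q - cnj_mat Q)"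
  proof (cases "K = {}")
    case True
    then show ?thesis using that[of 1] by simp
  next
    case False
    have "continuous_on K (\<lambda>Q. mat_l1_norm (Q - cnj_mat Q))"
      by (intro continuous_intros)
    then obtain Q0 where Q0: "Q0 \<in> K"
      and min: "\<And>Q. Q \<in> K \<Longrightarrow> mat_l1_norm (Q0 - cnj_mat Q0) \<le> mat_l1_norm (Q - cnj_mat Q)"
      using continuous_attains_inf[OF \<open>compact K\<close> False] by blast
    have "cnj_mat Q0 \<noteq> Q0"
    proof
      assume real: "cnj_mat Q0 = Q0"
      have "Q0 \<in> SO_C" using Q0 unfolding K_def by blast
      then have "r \<le> mat_l1_norm (Q0 - cplx_mat (re_mat Q0))"
        using Q0 SO_C_real_in_SO_R(1)[OF _ real] unfolding K_def by blast
      then show False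
        using r SO_C_real_in_SO_R(2)[OF \<open>Q0 \<in> SO_C\<close> real]
          mat_l1_norm_eq_0_iff[of "0::complex^'n^'n"] by simp
    qed
    then have "0 < mat_l1_norm (Q0 - cnj_mat Q0)"
      using mat_l1_norm_nonneg mat_l1_norm_eq_0_iff by (metis eq_iff_diff_eq_0 order_le_less)
    then show ?thesis using that min by blast
  qed
  show ?thesis
  proof (intro exI[of _ \<epsilon>] conjI allI impI \<epsilon>)
    fix Q :: "complex^'n^'n"
    assume Q: "Q \<in> SO_C \<and> mat_l1_norm Q \<le> \<rho> \<and> mat_l1_norm (Q - cnj_mat Q) < \<epsilon>"
    show "\<exists>V\<in>SO_R. mat_l1_norm (Q - cplx_mat V) < r"
    proof (rule ccontr)
      assume "\<not> ?thesis"
      then have "Q \<in> K" using Q unfolding K_def by (simp add: not_less)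
      then show False using \<epsilon>K[of Q] Q by simp
    qed
  qed
qed

lemma nearly_real_SO_C_linear_approx:
  fixes \<rho> :: real
  obtains \<epsilon> where "\<epsilon> > 0"
    and "\<And>Q::complex^'n^'n. Q \<in> SO_C \<Longrightarrow> mat_l1_norm Q \<le> \<rho> \<Longrightarrow> mat_l1_norm (Q - cnj_mat Q) < \<epsilon> \<Longrightarrow>
      \<exists>U\<in>SO_R. mat_l1_norm (Q - cplx_mat U)
        \<le> (2 * real CARD('n) + 1) * real CARD('n) ^ 10 * mat_l1_norm (Q - cnj_mat Q)"
proof -
  have "1 / real CARD('n) ^ 2 > 0" by simp
  from nearly_real_SO_C_near_SO_R[OF this, of \<rho>] obtain \<epsilon> where "\<epsilon> > 0"
    and "\<forall>Q::complex^'n^'n. Q \<in> SO_C \<and> mat_l1_norm Q \<le> \<rho> \<and> mat_l1_norm (Q - cnj_mat Q) < \<epsilon>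
      \<longrightarrow> (\<exists>V\<in>SO_R. mat_l1_norm (Q - cplx_mat V) < 1 / real CARD('n) ^ 2)"
    by blast
  with that show ?thesis
    using SO_C_near_SO_R_linear_approx by (meson less_imp_le)
qed

section \<open>Elements of \<open>SO(n,\<complex>)\<close> in \<open>M\<^sub>\<delta>\<close>\<close>

lemma opnorm_r_nonneg: "0 \<le> opnorm_r A"
  unfolding opnorm_r_def by (simp add: onorm_pos_le matrix_vector_mul_bounded_linear)

lemma abs_Re_le_opnorm_re_mat: "\<bar>Re (Q$i$j)\<bar> \<le> opnorm_r (re_mat Q)"
  using matrix_component_le_onorm[of "re_mat Q" i j] by (simp add: opnorm_r_def re_mat_def)

lemma abs_Im_le_opnorm_im_mat: "\<bar>Im (Q$i$j)\<bar> \<le> opnorm_r (im_mat Q)"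
  using matrix_component_le_onorm[of "im_mat Q" i j] by (simp add: opnorm_r_def im_mat_def)

lemma M_delta_pos:
  assumes "Q \<in> M_delta \<delta>"
  shows "0 < \<delta>"
proof (rule ccontr)
  assume "\<not> 0 < \<delta>"
  then have "\<delta> * opnorm_r (re_mat Q) \<le> 0"
    using opnorm_r_nonneg[of "re_mat Q"] by (simp add: mult_nonpos_nonneg not_less)
  then show False
    using assms opnorm_r_nonneg[of "im_mat Q"] unfolding M_delta_def by simp
qed

lemma sum_Re_sq_row_if_mult_transpose_eq_1:
  fixes Q :: "complex^'n^'m"
  assumes "Q ** transpose Q = mat 1"
  shows "(\<Sum>k\<in>UNIV. (Re (Q$i$k))^2) = 1 + (\<Sum>k\<in>UNIV. (Im (Q$i$k))^2)"
proof -
  have "(\<Sum>k\<in>UNIV. Q$i$k * Q$i$k) = 1"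
    using assms[THEN arg_cong[where f="\<lambda>A. A$i$i"]]
    by (simp add: matrix_matrix_mult_def transpose_def mat_def)
  then have "Re (\<Sum>k\<in>UNIV. Q$i$k * Q$i$k) = 1"
    by simp
  then have "(\<Sum>k\<in>UNIV. (Re (Q$i$k))^2 - (Im (Q$i$k))^2) = 1"
    by (simp add: Re_sum power2_eq_square)
  then show ?thesis
    by (simp add: sum_subtractf)
qed

lemma opnorm_re_mat_le_if_M_delta:
  fixes Q :: "complex^'n^'n"
  assumes Q: "Q ** transpose Q = mat 1" and QM: "Q \<in> M_delta \<delta>"
    and small: "real CARD('n) ^ 5 * \<delta>^2 \<le> 1/2"
  shows "opnorm_r (re_mat Q) \<le> 2 * real CARD('n) ^ 2"
proof -
  define n where "n = real CARD('n)"
  define a where "a = opnorm_r (re_mat Q)"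
  define b where "b = opnorm_r (im_mat Q)"
  have "b < \<delta> * a"
    using QM unfolding M_delta_def a_def b_def by simp
  then have b2: "b^2 \<le> \<delta>^2 * a^2"
    using power_mono[of b "\<delta> * a" 2] opnorm_r_nonneg[of "im_mat Q"]
    by (simp add: b_def power_mult_distrib)
  have "\<bar>Re (Q$i$j)\<bar> \<le> sqrt (1 + n * b^2)" for i j
  proof (rule real_le_rsqrt)
    have "\<bar>Re (Q$i$j)\<bar>^2 \<le> (\<Sum>k\<in>UNIV. (Re (Q$i$k))^2)"
      by (simp add: member_le_sum[where f="\<lambda>k. (Re (Q$i$k))^2"])
    also have "\<dots> \<le> 1 + (\<Sum>k\<in>(UNIV::'n set). b^2)"
      unfolding sum_Re_sq_row_if_mult_transpose_eq_1[OF Q]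
      using power_mono[OF abs_Im_le_opnorm_im_mat abs_ge_zero, where n=2]
      by (intro add_left_mono sum_mono) (simp add: b_def)
    finally show "\<bar>Re (Q$i$j)\<bar>^2 \<le> 1 + n * b^2" by (simp add: n_def)
  qed
  then have "a \<le> n * n * sqrt (1 + n * b^2)"
    unfolding a_def opnorm_r_def n_def by (intro onorm_le_matrix_component) (simp add: re_mat_def)
  then have "a^2 \<le> (n * n * sqrt (1 + n * b^2))^2"
    by (rule power_mono) (simp add: a_def opnorm_r_nonneg)
  also have "\<dots> = n^4 * (1 + n * b^2)"
    by (simp add: power_mult_distrib n_def power4_eq_xxxx power2_eq_square[of n])
  also have "\<dots> = n^4 + n^5 * b^2"
    by (simp add: algebra_simps eval_nat_numeral)
  also have "\<dots> \<le> n^4 + n^5 * \<delta>^2 * a^2"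
    using mult_left_mono[OF b2, of "n^5"] by (simp add: n_def mult.assoc)
  also have "\<dots> \<le> n^4 + a^2 / 2"
    using mult_right_mono[OF small, of "a^2"] by (simp add: n_def)
  finally have "a^2 \<le> 2 * n^4" by linarith
  also have "\<dots> \<le> (2 * n^2)^2"
    by (simp add: power_mult_distrib n_def flip: power_mult)
  finally have "a^2 \<le> (2 * n^2)^2" .
  then show ?thesis
    unfolding a_def n_def by (rule power2_le_imp_le) simp
qed

lemma M_delta_SO_C_bounds:
  fixes Q :: "complex^'n^'n"
  assumes Q: "Q \<in> SO_C" and QM: "Q \<in> M_delta \<delta>" and small: "2 * real CARD('n) ^ 3 * \<delta> \<le> 1"
  shows "mat_l1_norm Q \<le> 3 * real CARD('n) ^ 4"
    and "mat_l1_norm (Q - cnj_mat Q) \<le> 4 * real CARD('n) ^ 4 * \<delta>"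
proof -
  define n where "n = real CARD('n)"
  have n: "1 \<le> n" unfolding n_def by (simp add: Suc_le_eq)
  have \<delta>: "0 < \<delta>" using M_delta_pos[OF QM] .
  have "n^5 * \<delta>^2 \<le> (n^3 * \<delta>)^2"
    using n by (simp add: power_mult_distrib mult_right_mono power_increasing flip: power_mult)
  also have "\<dots> \<le> (1/2)^2"
    using small \<delta> n by (intro power_mono) (auto simp: n_def)
  finally have a: "opnorm_r (re_mat Q) \<le> 2 * n^2"
    using opnorm_re_mat_le_if_M_delta[OF _ QM] Q unfolding SO_C_def n_def by (simp add: power2_eq_square)
  have "opnorm_r (im_mat Q) < \<delta> * opnorm_r (re_mat Q)"
    using QM unfolding M_delta_def by simp
  also have "\<dots> \<le> 2 * n^2 * \<delta>"
    using mult_left_mono[OF a less_imp_le[OF \<delta>]] by (simp add: mult.commute)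
  finally have re: "\<bar>Re (Q$i$j)\<bar> \<le> 2 * n^2" and im: "\<bar>Im (Q$i$j)\<bar> \<le> 2 * n^2 * \<delta>" for i j
    using a abs_Re_le_opnorm_re_mat[of Q i j] abs_Im_le_opnorm_im_mat[of Q i j] by linarith+
  have "2 * \<delta> \<le> 2 * n^3 * \<delta>"
    using n \<delta> by (simp add: one_le_power)
  then have "2 * n^2 * \<delta> \<le> n^2"
    using small mult_left_mono[of "2 * \<delta>" 1 "n^2"] by (simp add: n_def mult_ac)
  then have "cmod (Q$i$j) \<le> 3 * n^2" for i j
    using cmod_le[of "Q$i$j"] re[of i j] im[of i j] by linarith
  then show "mat_l1_norm Q \<le> 3 * real CARD('n) ^ 4"
    using mat_l1_norm_le[of Q "3 * n^2"] by (simp add: n_def eval_nat_numeral)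
  have "cmod (Q$i$j - cnj (Q$i$j)) \<le> 4 * n^2 * \<delta>" for i j
    using im[of i j] by (simp add: complex_diff_cnj norm_mult mult_ac)
  then show "mat_l1_norm (Q - cnj_mat Q) \<le> 4 * real CARD('n) ^ 4 * \<delta>"
    using mat_l1_norm_le[of "Q - cnj_mat Q" "4 * n^2 * \<delta>"]
    by (simp add: cnj_mat_def n_def eval_nat_numeral mult_ac)
qed

theorem lemma8p1:
  shows "\<exists>C>0. \<exists>\<delta>0>0. \<forall>\<delta>. 0 < \<delta> \<and> \<delta> < \<delta>0 \<longrightarrow>
           (\<forall>Q::complex^'n::finite^'n. Q \<in> SO_C \<inter> M_delta \<delta> \<longrightarrow>
              (\<exists>U\<in>SO_R. opnorm_c (Q - cplx_mat U) < C * \<delta>))"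
proof -
  define n where "n = real CARD('n)"
  have n: "1 \<le> n" unfolding n_def by (simp add: Suc_le_eq)
  define K where "K = (2 * n + 1) * n^10"
  have K: "0 \<le> K" using n by (simp add: K_def)
  obtain \<epsilon> where \<epsilon>: "\<epsilon> > 0" and approx: "\<And>Q::complex^'n^'n. Q \<in> SO_C \<Longrightarrow> mat_l1_norm Q \<le> 3 * n^4
      \<Longrightarrow> mat_l1_norm (Q - cnj_mat Q) < \<epsilon>
      \<Longrightarrow> \<exists>U\<in>SO_R. mat_l1_norm (Q - cplx_mat U) \<le> K * mat_l1_norm (Q - cnj_mat Q)"
    using nearly_real_SO_C_linear_approx unfolding K_def n_def by metis
  define \<delta>0 where "\<delta>0 = min (1 / (2 * n^3)) (\<epsilon> / (4 * n^4))"
  have "\<exists>U\<in>SO_R. opnorm_c (Q - cplx_mat U) < (4 * K * n^4 + 1) * \<delta>"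
    if \<delta>: "0 < \<delta>" "\<delta> < \<delta>0" and Q: "Q \<in> SO_C" "Q \<in> M_delta \<delta>" for \<delta> and Q :: "complex^'n^'n"
  proof -
    have "2 * n^3 * \<delta> \<le> 1" and "4 * n^4 * \<delta> < \<epsilon>"
      using \<delta> n by (simp_all add: \<delta>0_def field_simps)
    with M_delta_SO_C_bounds[OF Q] obtain U where U: "U \<in> SO_R"
      and "opnorm_c (Q - cplx_mat U) \<le> K * mat_l1_norm (Q - cnj_mat Q)"
      and "mat_l1_norm (Q - cnj_mat Q) \<le> 4 * n^4 * \<delta>"
      using approx[OF Q(1)] opnorm_c_le_mat_l1_norm unfolding n_def by (meson le_less_trans order_trans)
    then have "opnorm_c (Q - cplx_mat U) \<le> K * (4 * n^4 * \<delta>)"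
      using K by (meson mult_left_mono order_trans)
    also have "\<dots> < (4 * K * n^4 + 1) * \<delta>"
      using \<delta> by (simp add: algebra_simps)
    finally show ?thesis using U by blast
  qed
  moreover have "0 < \<delta>0"
    using n \<epsilon> by (simp add: \<delta>0_def)
  moreover have "0 < 4 * K * n^4 + 1"
    using mult_nonneg_nonneg[OF K, of "n^4"] n by simp
  ultimately show ?thesis by blast
qed

end
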